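(* For every CABA framework $F_c$, $\mathit{GrCInst}(\mathit{CArg})=\mathit{GrCInst}(\mathit{MGCArg})$.
   Context: Conventions. $\mathsf X$ denotes a tuple of variables and $\mathsf t$ a tuple of terms. A substitution $\vartheta=\{X_1/t_1,\dots,X_n/t_n\}$ maps distinct variables to terms; $e\vartheta$ replaces each occurrence of $X_i$ in $e$ by $t_i$; $\{\mathsf X/\mathsf t\}$ maps $\mathsf X$ componentwise to $\mathsf t$. An object is ground if it has no variables. Theory of constraints. $\mathcal{CT}$ is a first-order theory with equality whose atomic formulas form the set $\mathcal C$ of constraints; a finite set $\{c_1,\dots,c_n\}\subseteq\mathcal C$ is consistent if $\mathcal{CT}\models\exists(c_1\wedge\dots\wedge c_n)$. CABA framework $F_c=\langle\mathcal L_c,\mathcal C,\mathcal R,\mathcal{CT},\mathcal A,\overline{\cdot}\rangle$: $\mathcal L_c$ a set of atoms; $\mathcal C\subseteq\mathcal L_c$ the constraints of $\mathcal{CT}$; $\mathcal R$ a set of rules $s_0\leftarrow s_1,\dots,s_m$ ($s_0\in\mathcal L_c\setminus\mathcal C$, $s_i\in\mathcal L_c$), in normalised form $p(\mathsf X_0)\leftarrow C,p_1(\mathsf X_1),\dots,p_m(\mathsf X_m)$ with $C\subseteq\mathcal C$ and each $\mathsf X_i$ a tuple of distinct variables; $\mathcal A\subseteq\mathcal L_c\setminus\mathcal C$ a nonempty set of assumptions that are not heads of rules; $\overline\cdot:\mathcal A\to\mathcal L_c\setminus\mathcal C$ a total contrary map with $\overline{p(\mathsf t)}=cp(\mathsf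 t)$ for a fixed predicate $cp$ per assumption predicate $p$; $\mathcal L_c,\mathcal C,\mathcal A$ predicate closed. Tight constrained argument $C\cup A\vdash_R s$ (consistent $C\subseteq\mathcal C$, $A\subseteq\mathcal A$, $R\subseteq\mathcal R$, $s\in\mathcal L_c\setminus\mathcal C$): a finite tree with root $s$ in which every non-leaf node $p(\mathsf t)$ has as children exactly $s_1\vartheta,\dots,s_m\vartheta$ for exactly one renamed-apart copy $p(\mathsf X)\leftarrow s_1,\dots,s_m$ of a rule in $R$, $\vartheta=\{\mathsf X/\mathsf t\}$ (or the single child true for a fact), every leaf being a constraint in $C$, an assumption in $A$ or true; $C,A,R$ are exactly the constraints, assumptions and rules of the tree. Most general: tight with claim of the form $p(\mathsf X)$. A constrained argument is $C'\cup A'\vdash_R s'$ such that there are a tight constrained argument $C\cup A\vdash_R s$, a substitution $\vartheta$ and $D\subseteq\mathcal C$ with $C'=C\vartheta\cup D$, $A'=A\vartheta$, $s'=s\vartheta$ and $C'$ consistent. $\alpha'=C'\cup A'\vdash_R s'$ is a constrained instance (via $\vartheta$, $D$) of a constrained argument $\alpha=C\cup A\vdash_R s$ if $C'=C\vartheta\cup D$, $A'=A\vartheta$, $s'=s\vartheta$ and $C'$ is consistent. $\mathit{MGCArg}$, $\mathit{CArg}$: sets of most general and of all constrained arguments of $F_c$. $\mathit{GrCInst}(\alpha)$ is the set of ground constrained instances of $\alpha$, and $\mathit{GrCInst}(\Gamma)=\bigcup_{\alpha\in\Gamma}\mathit{GrCInst}(\alpha)$. *)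

theory Defs
  imports Main
begin

datatype ('f,'v) trm = Var 'v | Fn 'f "('f,'v) trm list"

type_synonym ('p,'f,'v) atom = "'p \<times> ('f,'v) trm list"

text \<open>A rule s0 <- s1,...,sm is a pair (head, body list).\<close>
type_synonym ('p,'f,'v) rule = "('p,'f,'v) atom \<times> ('p,'f,'v) atom list"

fun tvars :: "('f,'v) trm \<Rightarrow> 'v set" where
  "tvars (Var x) = {x}"
| "tvars (Fn f ts) = (\<Union>t\<in>set ts. tvars t)"

definition avars :: "('p,'f,'v) atom \<Rightarrow> 'v set" where
  "avars a = (\<Union>t\<in>set (snd a). tvars t)"

definition rvars :: "('p,'f,'v) rule \<Rightarrow> 'v set" where
  "rvars r = avars (fst r) \<union> (\<Union>b\<in>set (snd r). avars b)"

fun tsubst :: "('v \<Rightarrow> ('f,'v) trm) \<Rightarrow> ('f,'v) trm \<Rightarrow> ('f,'v) trm" where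
  "tsubst \<sigma> (Var x) = \<sigma> x"
| "tsubst \<sigma> (Fn f ts) = Fn f (map (tsubst \<sigma>) ts)"

definition asubst :: "('v \<Rightarrow> ('f,'v) trm) \<Rightarrow> ('p,'f,'v) atom \<Rightarrow> ('p,'f,'v) atom" where
  "asubst \<sigma> a = (fst a, map (tsubst \<sigma>) (snd a))"

definition rename :: "('v \<Rightarrow> 'v) \<Rightarrow> ('p,'f,'v) rule \<Rightarrow> ('p,'f,'v) rule" where
  "rename \<rho> r = (asubst (Var \<circ> \<rho>) (fst r), map (asubst (Var \<circ> \<rho>)) (snd r))"

fun var_of :: "('f,'v) trm \<Rightarrow> 'v" where
  "var_of (Var x) = x"
| "var_of (Fn f ts) = undefined"

definition bind :: "'v list \<Rightarrow> ('f,'v) trm list \<Rightarrow> 'v \<Rightarrow> ('f,'v) trm" where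
  "bind Xs ts x = (case map_of (zip Xs ts) x of Some t \<Rightarrow> t | None \<Rightarrow> Var x)"

definition is_var_tuple :: "('f,'v) trm list \<Rightarrow> bool" where
  "is_var_tuple ts \<longleftrightarrow> (\<exists>Xs. ts = map Var Xs \<and> distinct Xs)"

type_synonym ('f,'p,'d) struct = "('f \<Rightarrow> 'd list \<Rightarrow> 'd) \<times> ('p \<Rightarrow> 'd list \<Rightarrow> bool)"

fun eval :: "('f,'p,'d) struct \<Rightarrow> ('v \<Rightarrow> 'd) \<Rightarrow> ('f,'v) trm \<Rightarrow> 'd" where
  "eval M val (Var x) = val x"
| "eval M val (Fn f ts) = fst M f (map (eval M val) ts)"

definition holds :: "('f,'p,'d) struct \<Rightarrow> ('v \<Rightarrow> 'd) \<Rightarrow> ('p,'f,'v) atom \<Rightarrow> bool" where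
  "holds M val a = snd M (fst a) (map (eval M val) (snd a))"

text \<open>The language L_c, the constraints C and the assumptions A are predicate closed,
  hence given by sets of predicate symbols. The theory CT is given by its class of models
  (over the domain type 'd); eqp is the equality predicate of CT.\<close>
record ('p,'f,'v,'d) caba =
  preds :: "'p set"
  cpreds :: "'p set"
  apreds :: "'p set"
  contr :: "'p \<Rightarrow> 'p"
  rules :: "('p,'f,'v) rule set"
  eqp :: 'p
  models :: "('f,'p,'d) struct set"

definition normalised :: "'p set \<Rightarrow> ('p,'f,'v) rule \<Rightarrow> bool" where
  "normalised CP r \<longleftrightarrow> is_var_tuple (snd (fst r)) \<and>
     (\<forall>b\<in>set (snd r). fst b \<notin> CP \<longrightarrow> is_var_tuple (snd b))"

definition caba_framework :: "('p,'f,'v,'d) caba \<Rightarrow> bool" where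
  "caba_framework F \<longleftrightarrow>
     cpreds F \<subseteq> preds F \<and> apreds F \<subseteq> preds F - cpreds F \<and> apreds F \<noteq> {} \<and>
     eqp F \<in> cpreds F \<and>
     (\<forall>M\<in>models F. \<forall>x y. snd M (eqp F) [x, y] = (x = y)) \<and>
     (\<forall>p\<in>apreds F. contr F p \<in> preds F - cpreds F) \<and>
     (\<forall>r\<in>rules F. normalised (cpreds F) r \<and>
        fst (fst r) \<in> preds F - cpreds F - apreds F \<and>
        (\<forall>b\<in>set (snd r). fst b \<in> preds F))"

definition consistent :: "('p,'f,'v,'d) caba \<Rightarrow> ('p,'f,'v) atom set \<Rightarrow> bool" where
  "consistent F C \<longleftrightarrow> finite C \<and> fst ` C \<subseteq> cpreds F \<and>
     (\<forall>M\<in>models F. \<exists>val. \<forall>c\<in>C. holds M val c)"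

text \<open>ALeaf a: a leaf labelled by a constraint or assumption; ATrue: the leaf true;
  ANode a r rho cs: a node labelled a, expanded with the copy (rename rho r) of rule r.\<close>
datatype ('p,'f,'v) atree =
    ALeaf "('p,'f,'v) atom"
  | ATrue
  | ANode "('p,'f,'v) atom" "('p,'f,'v) rule" "'v \<Rightarrow> 'v" "('p,'f,'v) atree list"

fun label :: "('p,'f,'v) atree \<Rightarrow> ('p,'f,'v) atom option" where
  "label (ALeaf a) = Some a"
| "label ATrue = None"
| "label (ANode a r \<rho> cs) = Some a"

fun wf_tree :: "('p,'f,'v,'d) caba \<Rightarrow> ('p,'f,'v) atree \<Rightarrow> bool" where
  "wf_tree F (ALeaf a) = (fst a \<in> cpreds F \<or> fst a \<in> apreds F)"
| "wf_tree F ATrue = True"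
| "wf_tree F (ANode a r \<rho> cs) =
     (r \<in> rules F \<and> inj \<rho> \<and>
      (let h = fst (rename \<rho> r); bd = snd (rename \<rho> r);
           \<theta> = bind (map var_of (snd h)) (snd a)
       in fst h = fst a \<and> length (snd h) = length (snd a) \<and>
          (if bd = [] then cs = [ATrue] else map label cs = map (Some \<circ> asubst \<theta>) bd)) \<and>
      (\<forall>c\<in>set cs. wf_tree F c))"

fun tcopies :: "('p,'f,'v) atree \<Rightarrow> ('p,'f,'v) rule list" where
  "tcopies (ALeaf a) = []"
| "tcopies ATrue = []"
| "tcopies (ANode a r \<rho> cs) = rename \<rho> r # concat (map tcopies cs)"

fun tleaves :: "('p,'f,'v) atree \<Rightarrow> ('p,'f,'v) atom set" where
  "tleaves (ALeaf a) = {a}"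
| "tleaves ATrue = {}"
| "tleaves (ANode a r \<rho> cs) = (\<Union>c\<in>set cs. tleaves c)"

fun trules :: "('p,'f,'v) atree \<Rightarrow> ('p,'f,'v) rule set" where
  "trules (ALeaf a) = {}"
| "trules ATrue = {}"
| "trules (ANode a r \<rho> cs) = insert r (\<Union>c\<in>set cs. trules c)"

definition renamed_apart :: "('p,'f,'v) atree \<Rightarrow> bool" where
  "renamed_apart t \<longleftrightarrow>
     (let cps = tcopies t in
       (\<forall>i<length cps. \<forall>j<length cps. i \<noteq> j \<longrightarrow> rvars (cps ! i) \<inter> rvars (cps ! j) = {}) \<and>
       (\<forall>i<length cps. \<forall>a. label t = Some a \<longrightarrow> rvars (cps ! i) \<inter> avars a = {}))"

text \<open>An argument C \<union> A |-_R s is represented by the tuple (C, A, R, s).\<close>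
type_synonym ('p,'f,'v) carg =
  "('p,'f,'v) atom set \<times> ('p,'f,'v) atom set \<times> ('p,'f,'v) rule set \<times> ('p,'f,'v) atom"

definition tight :: "('p,'f,'v,'d) caba \<Rightarrow> ('p,'f,'v) carg \<Rightarrow> bool" where
  "tight F \<alpha> \<longleftrightarrow> (case \<alpha> of (C, A, R, s) \<Rightarrow>
     fst s \<in> preds F - cpreds F \<and> consistent F C \<and>
     (\<exists>t. wf_tree F t \<and> renamed_apart t \<and> label t = Some s \<and>
          C = {a\<in>tleaves t. fst a \<in> cpreds F} \<and>
          A = {a\<in>tleaves t. fst a \<in> apreds F} \<and>
          R = trules t))"

definition MGCArg :: "('p,'f,'v,'d) caba \<Rightarrow> ('p,'f,'v) carg set" where
  "MGCArg F = {(C, A, R, s). tight F (C, A, R, s) \<and> is_var_tuple (snd s)}"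

definition cinst :: "('p,'f,'v,'d) caba \<Rightarrow> ('p,'f,'v) carg \<Rightarrow> ('p,'f,'v) carg \<Rightarrow> bool" where
  "cinst F \<alpha> \<alpha>' \<longleftrightarrow> (case \<alpha> of (C, A, R, s) \<Rightarrow> case \<alpha>' of (C', A', R', s') \<Rightarrow>
     R' = R \<and> (\<exists>\<theta> D. fst ` D \<subseteq> cpreds F \<and>
        C' = asubst \<theta> ` C \<union> D \<and> A' = asubst \<theta> ` A \<and> s' = asubst \<theta> s \<and>
        consistent F C'))"

definition CArg :: "('p,'f,'v,'d) caba \<Rightarrow> ('p,'f,'v) carg set" where
  "CArg F = {\<alpha>'. \<exists>\<alpha>. tight F \<alpha> \<and> cinst F \<alpha> \<alpha>'}"

definition ground_carg :: "('p,'f,'v) carg \<Rightarrow> bool" where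
  "ground_carg \<alpha> \<longleftrightarrow> (case \<alpha> of (C, A, R, s) \<Rightarrow>
     (\<forall>c\<in>C. avars c = {}) \<and> (\<forall>a\<in>A. avars a = {}) \<and> avars s = {})"

definition GrCInst :: "('p,'f,'v,'d) caba \<Rightarrow> ('p,'f,'v) carg set \<Rightarrow> ('p,'f,'v) carg set" where
  "GrCInst F \<Gamma> = (\<Union>\<alpha>\<in>\<Gamma>. {\<alpha>'. cinst F \<alpha> \<alpha>' \<and> ground_carg \<alpha>'})"

end

theory Submission
  imports Defs
begin

text \<open>
  Every tight argument is a constrained instance of a most general one. Replace the arguments
  of its claim by fresh distinct variables X and propagate the new labels down the same tree,
  node by node, through the same renamed-apart rule copies. Since X avoids the variables of
  these copies, the substitution {X/t} fixes them and therefore maps the new tree back onto the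
  old one; in particular it maps the constraints and assumptions of the general argument onto
  the given ones, and consistency passes from the given constraints to the general ones by
  composing valuations with {X/t}. As constrained instances compose, every ground instance of a
  constrained argument is then a ground instance of a most general one.
\<close>

lemma tsubst_Var: "tsubst Var u = u"
  by (induction u) (auto simp: map_idI)

lemma asubst_Var: "asubst Var a = a"
  by (simp add: asubst_def tsubst_Var map_idI)

lemma tsubst_tsubst: "tsubst \<tau> (tsubst \<sigma> u) = tsubst (\<lambda>x. tsubst \<tau> (\<sigma> x)) u"
  by (induction u) auto

lemma asubst_asubst: "asubst \<tau> (asubst \<sigma> a) = asubst (\<lambda>x. tsubst \<tau> (\<sigma> x)) a"
  by (simp add: asubst_def tsubst_tsubst)

lemma fst_asubst [simp]: "fst (asubst \<sigma> a) = fst a"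
  by (simp add: asubst_def)

lemma eval_tsubst: "eval M val (tsubst \<sigma> u) = eval M (\<lambda>x. eval M val (\<sigma> x)) u"
  by (induction u) (auto simp: o_def cong: map_cong)

lemma holds_asubst: "holds M val (asubst \<sigma> a) = holds M (\<lambda>x. eval M val (\<sigma> x)) a"
  by (simp add: holds_def asubst_def eval_tsubst o_def)

lemma map_bind_distinct: "distinct Xs \<Longrightarrow> length Xs = length ts \<Longrightarrow> map (bind Xs ts) Xs = ts"
  by (simp add: bind_def map_of_zip_nth list_eq_iff_nth_eq)

lemma bind_notin: "x \<notin> set Xs \<Longrightarrow> bind Xs ts x = Var x"
  by (auto simp: bind_def dest: map_of_SomeD set_zip_leftD split: option.splits)

lemma map_of_zip_map: "map_of (zip Xs (map f ts)) x = map_option f (map_of (zip Xs ts) x)"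
  by (induction Xs arbitrary: ts) (auto simp: zip_Cons1 split: list.splits)

lemma tsubst_bind:
  "\<forall>x\<in>tvars u. \<sigma> x = Var x \<Longrightarrow>
   tsubst \<sigma> (tsubst (bind Xs ts) u) = tsubst (bind Xs (map (tsubst \<sigma>) ts)) u"
  by (induction u) (auto simp: bind_def map_of_zip_map split: option.splits)

lemma asubst_bind:
  "\<forall>x\<in>avars a. \<sigma> x = Var x \<Longrightarrow>
   asubst \<sigma> (asubst (bind Xs ts) a) = asubst (bind Xs (map (tsubst \<sigma>) ts)) a"
  by (auto simp: asubst_def avars_def tsubst_bind)

lemma finite_tvars: "finite (tvars u)"
  by (induction u) auto

lemma finite_rvars: "finite (rvars r)"
  by (simp add: rvars_def avars_def finite_tvars)

lemma finite_tleaves: "finite (tleaves t)"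
  by (induction t) auto

lemma ex_distinct_list_fresh:
  assumes "infinite (UNIV :: 'v set)" and "finite (V :: 'v set)"
  obtains Xs where "distinct Xs" "length Xs = n" "set Xs \<inter> V = {}"
proof -
  have "infinite (UNIV - V)" using assms by (simp add: Diff_infinite_finite)
  then obtain B where B: "finite B" "card B = n" "B \<subseteq> UNIV - V"
    using infinite_arbitrarily_large by blast
  obtain Xs where "set Xs = B" "distinct Xs" using finite_distinct_list[OF B(1)] by blast
  then show ?thesis using B that distinct_card by fastforce
qed

lemma consistent_if_consistent_instance:
  assumes "consistent F (asubst \<sigma> ` C)" "finite C" "fst ` C \<subseteq> cpreds F"
  shows "consistent F C"
  using assms by (fastforce simp: consistent_def holds_asubst)

lemma cinst_refl: "consistent F C \<Longrightarrow> cinst F (C, A, R, s) (C, A, R, s)"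
  unfolding cinst_def by (auto simp: asubst_Var intro!: exI[of _ Var] exI[of _ "{}"])

lemma cinst_trans:
  assumes "cinst F \<alpha> \<beta>" "cinst F \<beta> \<gamma>"
  shows "cinst F \<alpha> \<gamma>"
proof -
  obtain C A R s where \<alpha>: "\<alpha> = (C, A, R, s)" by (cases \<alpha>) auto
  obtain C1 A1 R1 s1 where \<beta>: "\<beta> = (C1, A1, R1, s1)" by (cases \<beta>) auto
  obtain C2 A2 R2 s2 where \<gamma>: "\<gamma> = (C2, A2, R2, s2)" by (cases \<gamma>) auto
  from assms(1) obtain \<theta>1 D1 where 1: "R1 = R" "fst ` D1 \<subseteq> cpreds F"
    "C1 = asubst \<theta>1 ` C \<union> D1" "A1 = asubst \<theta>1 ` A" "s1 = asubst \<theta>1 s"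
    unfolding cinst_def \<alpha> \<beta> by auto
  from assms(2) obtain \<theta>2 D2 where 2: "R2 = R1" "fst ` D2 \<subseteq> cpreds F"
    "C2 = asubst \<theta>2 ` C1 \<union> D2" "A2 = asubst \<theta>2 ` A1" "s2 = asubst \<theta>2 s1" "consistent F C2"
    unfolding cinst_def \<beta> \<gamma> by auto
  let ?\<theta> = "\<lambda>x. tsubst \<theta>2 (\<theta>1 x)" and ?D = "asubst \<theta>2 ` D1 \<union> D2"
  have "fst ` ?D \<subseteq> cpreds F" using 1 2 by (auto simp: image_iff)
  moreover have "C2 = asubst ?\<theta> ` C \<union> ?D"
    using 1 2 by (auto simp: image_Un image_image asubst_asubst)
  moreover have "A2 = asubst ?\<theta> ` A" "s2 = asubst ?\<theta> s"
    using 1 2 by (auto simp: image_image asubst_asubst)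
  ultimately show ?thesis using 1 2 unfolding cinst_def \<alpha> \<gamma> by auto
qed

definition node_bind :: "('v \<Rightarrow> 'v) \<Rightarrow> ('p,'f,'v) rule \<Rightarrow> ('p,'f,'v) atom \<Rightarrow> 'v \<Rightarrow> ('f,'v) trm" where
  "node_bind \<rho> r a = bind (map var_of (snd (fst (rename \<rho> r)))) (snd a)"

lemma wf_tree_ANode:
  "wf_tree F (ANode a r \<rho> cs) \<longleftrightarrow>
     r \<in> rules F \<and> inj \<rho> \<and> fst (fst (rename \<rho> r)) = fst a \<and>
     length (snd (fst (rename \<rho> r))) = length (snd a) \<and>
     (if snd (rename \<rho> r) = [] then cs = [ATrue]
      else map label cs = map (Some \<circ> asubst (node_bind \<rho> r a)) (snd (rename \<rho> r))) \<and>
     (\<forall>c\<in>set cs. wf_tree F c)"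
  by (simp add: node_bind_def Let_def)

lemma asubst_node_bind:
  "\<forall>x\<in>avars b. \<sigma> x = Var x \<Longrightarrow>
   asubst \<sigma> (asubst (node_bind \<rho> r a) b) = asubst (node_bind \<rho> r (asubst \<sigma> a)) b"
  by (simp add: node_bind_def asubst_bind) (simp add: asubst_def)

function relabel :: "('p,'f,'v) atom \<Rightarrow> ('p,'f,'v) atree \<Rightarrow> ('p,'f,'v) atree" where
  "relabel a (ALeaf b) = ALeaf a"
| "relabel a ATrue = ATrue"
| "relabel a (ANode b r \<rho> cs) =
     ANode a r \<rho> (map (\<lambda>i. relabel (asubst (node_bind \<rho> r a) (snd (rename \<rho> r) ! i)) (cs ! i))
       [0..<length cs])"
  by pat_completeness auto
termination
  by (relation "measure (\<lambda>(a, t). size t)")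
    (auto intro: le_less_trans[OF size_list_estimation'] nth_mem)

lemma tcopies_relabel: "tcopies (relabel a t) = tcopies t"
proof (induction a t rule: relabel.induct)
  case (3 a b r \<rho> cs)
  then have "map tcopies (map (\<lambda>i. relabel (asubst (node_bind \<rho> r a) (snd (rename \<rho> r) ! i)) (cs ! i))
      [0..<length cs]) = map tcopies cs"
    by (intro nth_equalityI) simp_all
  then show ?case by simp
qed auto

lemma trules_relabel: "trules (relabel a t) = trules t"
proof (induction a t rule: relabel.induct)
  case (3 a b r \<rho> cs)
  then have "map trules (map (\<lambda>i. relabel (asubst (node_bind \<rho> r a) (snd (rename \<rho> r) ! i)) (cs ! i))
      [0..<length cs]) = map trules cs"
    by (intro nth_equalityI) simp_all
  then show ?case by (simp only: relabel.simps trules.simps image_set)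
qed auto

lemma label_relabel: "t \<noteq> ATrue \<Longrightarrow> label (relabel a t) = Some a"
  by (cases t) auto

definition copy_vars :: "('p,'f,'v) atree \<Rightarrow> 'v set" where
  "copy_vars t = (\<Union>r\<in>set (tcopies t). rvars r)"

lemma copy_vars_child: "c \<in> set cs \<Longrightarrow> copy_vars c \<subseteq> copy_vars (ANode a r \<rho> cs)"
  by (auto simp: copy_vars_def)

lemma relabel_premises_child:
  assumes wf: "wf_tree F (ANode b r \<rho> cs)" and b: "b = asubst \<sigma> a"
    and fixed: "\<forall>x\<in>copy_vars (ANode b r \<rho> cs). \<sigma> x = Var x"
    and i: "i < length cs" "cs ! i \<noteq> ATrue"
  shows "wf_tree F (cs ! i)"
    and "label (cs ! i) = Some (asubst \<sigma> (asubst (node_bind \<rho> r a) (snd (rename \<rho> r) ! i)))"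
    and "\<forall>x\<in>copy_vars (cs ! i). \<sigma> x = Var x"
proof -
  let ?bd = "snd (rename \<rho> r)"
  show "wf_tree F (cs ! i)" using wf i by simp
  show "\<forall>x\<in>copy_vars (cs ! i). \<sigma> x = Var x"
    using fixed copy_vars_child[OF nth_mem[OF i(1)]] by blast
  have "?bd \<noteq> []" using wf i unfolding wf_tree_ANode by (auto simp: less_Suc_eq)
  then have labels: "map label cs = map (Some \<circ> asubst (node_bind \<rho> r (asubst \<sigma> a))) ?bd"
    using wf b unfolding wf_tree_ANode by simp
  then have "i < length ?bd" using i by (metis length_map)
  \<comment> \<open>\<sigma> fixes the rule copy, so it commutes past the node substitution\<close>
  then have "\<forall>x\<in>avars (?bd ! i). \<sigma> x = Var x" using fixed by (auto simp: rvars_def copy_vars_def)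
  then show "label (cs ! i) = Some (asubst \<sigma> (asubst (node_bind \<rho> r a) (?bd ! i)))"
    using labels i \<open>i < length ?bd\<close> by (simp add: asubst_node_bind) (metis comp_apply nth_map)
qed

lemma wf_tree_relabel:
  assumes "wf_tree F t" "label t = Some (asubst \<sigma> a)" "\<forall>x\<in>copy_vars t. \<sigma> x = Var x"
  shows "wf_tree F (relabel a t)"
  using assms
proof (induction a t rule: relabel.induct)
  case (3 a b r \<rho> cs)
  let ?bd = "snd (rename \<rho> r)" and ?\<theta> = "node_bind \<rho> r a"
  let ?cs' = "map (\<lambda>i. relabel (asubst ?\<theta> (?bd ! i)) (cs ! i)) [0..<length cs]"
  have b: "b = asubst \<sigma> a" using "3.prems"(2) by simp
  then have wf: "wf_tree F (ANode (asubst \<sigma> a) r \<rho> cs)" using "3.prems"(1) by blast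
  have children: "wf_tree F (?cs' ! i) \<and> (cs ! i \<noteq> ATrue \<longrightarrow> label (?cs' ! i) = Some (asubst ?\<theta> (?bd ! i)))"
    if "i < length cs" for i
  proof (cases "cs ! i = ATrue")
    case False
    then show ?thesis
      using "3.IH" relabel_premises_child[OF "3.prems"(1) b "3.prems"(3) that False] that
      by (simp add: label_relabel)
  qed (simp add: that)
  show ?case
  proof (cases "?bd = []")
    case True
    then show ?thesis using wf unfolding wf_tree_ANode by (simp add: asubst_def)
  next
    case False
    then have "map label cs = map (Some \<circ> asubst (node_bind \<rho> r (asubst \<sigma> a))) ?bd"
      using wf unfolding wf_tree_ANode by simp
    then have len: "length cs = length ?bd" by (metis length_map)
    have "cs ! i \<noteq> ATrue" if "i < length cs" for i
      using nth_map[of i cs label] \<open>map label cs = _\<close> that len by auto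
    then have "map label ?cs' = map (Some \<circ> asubst ?\<theta>) ?bd"
      using children len by (intro nth_equalityI) auto
    then show ?thesis
      using wf False children unfolding wf_tree_ANode relabel.simps
      by (auto simp: asubst_def in_set_conv_nth)
  qed
qed auto

lemma tleaves_relabel:
  assumes "wf_tree F t" "label t = Some (asubst \<sigma> a)" "\<forall>x\<in>copy_vars t. \<sigma> x = Var x"
  shows "tleaves t = asubst \<sigma> ` tleaves (relabel a t)"
  using assms
proof (induction a t rule: relabel.induct)
  case (3 a b r \<rho> cs)
  let ?bd = "snd (rename \<rho> r)" and ?\<theta> = "node_bind \<rho> r a"
  let ?cs' = "map (\<lambda>i. relabel (asubst ?\<theta> (?bd ! i)) (cs ! i)) [0..<length cs]"
  have b: "b = asubst \<sigma> a" using "3.prems"(2) by simp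
  have "tleaves (cs ! i) = asubst \<sigma> ` tleaves (?cs' ! i)" if "i < length cs" for i
  proof (cases "cs ! i = ATrue")
    case False
    then show ?thesis
      using "3.IH" relabel_premises_child[OF "3.prems"(1) b "3.prems"(3) that False] that by simp
  qed (simp add: that)
  then have "map tleaves cs = map (\<lambda>c. asubst \<sigma> ` tleaves c) ?cs'"
    by (intro nth_equalityI) auto
  then have "tleaves ` set cs = (\<lambda>c. asubst \<sigma> ` tleaves c) ` set ?cs'"
    by (simp only: image_set)
  then show ?case by (simp only: relabel.simps tleaves.simps image_UN)
qed auto

lemma renamed_apart_relabel:
  assumes "renamed_apart t" "avars a \<inter> copy_vars t = {}"
  shows "renamed_apart (relabel a t)"
proof (cases "t = ATrue")
  case False
  have "rvars (tcopies t ! i) \<inter> avars a = {}" if "i < length (tcopies t)" for i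
    using assms(2) nth_mem[OF that] by (auto simp: copy_vars_def)
  then show ?thesis
    using assms(1) False by (simp add: renamed_apart_def Let_def tcopies_relabel label_relabel)
qed (use assms in simp)

lemma ex_MGCArg_cinst_of_tight:
  fixes s :: "('p,'f,'v) atom"
  assumes "infinite (UNIV :: 'v set)" and tight: "tight F (C, A, R, s)"
  shows "\<exists>\<alpha>\<in>MGCArg F. cinst F \<alpha> (C, A, R, s)"
proof -
  from tight obtain t where t: "fst s \<in> preds F - cpreds F" "consistent F C"
    "wf_tree F t" "renamed_apart t" "label t = Some s"
    "C = {c\<in>tleaves t. fst c \<in> cpreds F}" "A = {b\<in>tleaves t. fst b \<in> apreds F}" "R = trules t"
    unfolding tight_def by auto
  have "finite (copy_vars t)" by (simp add: copy_vars_def finite_rvars)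
  then obtain Xs where Xs: "distinct Xs" "length Xs = length (snd s)" "set Xs \<inter> copy_vars t = {}"
    using ex_distinct_list_fresh[OF assms(1)] by metis
  define \<sigma> where "\<sigma> = bind Xs (snd s)"
  define s0 :: "('p,'f,'v) atom" where "s0 = (fst s, map Var Xs)"
  let ?t0 = "relabel s0 t"
  define C0 where "C0 = {c\<in>tleaves ?t0. fst c \<in> cpreds F}"
  define A0 where "A0 = {b\<in>tleaves ?t0. fst b \<in> apreds F}"
  have s: "s = asubst \<sigma> s0"
    using Xs by (simp add: s0_def asubst_def o_def \<sigma>_def map_bind_distinct)
  have fixed: "\<forall>x\<in>copy_vars t. \<sigma> x = Var x"
    using Xs(3) by (auto simp: \<sigma>_def intro!: bind_notin)
  have "tleaves t = asubst \<sigma> ` tleaves ?t0"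
    using tleaves_relabel[OF t(3) _ fixed] t(5) s by simp
  then have C: "C = asubst \<sigma> ` C0" and A: "A = asubst \<sigma> ` A0"
    using t(6,7) by (auto simp: C0_def A0_def)
  have "finite C0"
    unfolding C0_def by (rule finite_subset[OF _ finite_tleaves]) auto
  then have "consistent F C0"
    using consistent_if_consistent_instance t(2) C by (auto simp: C0_def)
  moreover have "wf_tree F ?t0" using wf_tree_relabel[OF t(3) _ fixed] t(5) s by simp
  moreover have "renamed_apart ?t0"
    using renamed_apart_relabel[OF t(4)] Xs(3) by (simp add: s0_def avars_def)
  moreover have "label ?t0 = Some s0" using t(5) by (intro label_relabel) auto
  ultimately have "tight F (C0, A0, R, s0)"
    unfolding tight_def using t(1,8) by (auto simp: s0_def C0_def A0_def trules_relabel)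
  then have "(C0, A0, R, s0) \<in> MGCArg F"
    using Xs(1) by (auto simp: MGCArg_def s0_def is_var_tuple_def)
  moreover have "cinst F (C0, A0, R, s0) (C, A, R, s)"
    unfolding cinst_def using C A s t(2) by (auto intro!: exI[of _ \<sigma>] exI[of _ "{}"])
  ultimately show ?thesis by blast
qed

lemma ex_MGCArg_cinst_of_CArg:
  fixes \<alpha> :: "('p,'f,'v) carg"
  assumes "infinite (UNIV :: 'v set)" and "\<alpha> \<in> CArg F"
  shows "\<exists>\<alpha>0\<in>MGCArg F. cinst F \<alpha>0 \<alpha>"
proof -
  obtain C A R s where "tight F (C, A, R, s)" and "cinst F (C, A, R, s) \<alpha>"
    using assms(2) unfolding CArg_def by auto
  then show ?thesis using ex_MGCArg_cinst_of_tight[OF assms(1)] cinst_trans by blast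
qed

lemma MGCArg_subset_CArg: "MGCArg F \<subseteq> CArg F"
proof
  fix \<alpha> assume "\<alpha> \<in> MGCArg F"
  then obtain C A R s where \<alpha>: "\<alpha> = (C, A, R, s)" "tight F \<alpha>" by (auto simp: MGCArg_def)
  then have "cinst F \<alpha> \<alpha>" by (simp add: tight_def cinst_refl)
  then show "\<alpha> \<in> CArg F" using \<alpha>(2) unfolding CArg_def by blast
qed

lemma GrCInst_mono: "\<Gamma> \<subseteq> \<Delta> \<Longrightarrow> GrCInst F \<Gamma> \<subseteq> GrCInst F \<Delta>"
  by (auto simp: GrCInst_def)

lemma GrCInst_subset_if_cinst:
  assumes "\<And>\<alpha>. \<alpha> \<in> \<Gamma> \<Longrightarrow> \<exists>\<beta>\<in>\<Delta>. cinst F \<beta> \<alpha>"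
  shows "GrCInst F \<Gamma> \<subseteq> GrCInst F \<Delta>"
proof
  fix \<gamma> assume "\<gamma> \<in> GrCInst F \<Gamma>"
  then obtain \<alpha> where "\<alpha> \<in> \<Gamma>" "cinst F \<alpha> \<gamma>" "ground_carg \<gamma>" unfolding GrCInst_def by blast
  moreover obtain \<beta> where "\<beta> \<in> \<Delta>" "cinst F \<beta> \<alpha>" using assms \<open>\<alpha> \<in> \<Gamma>\<close> by blast
  ultimately show "\<gamma> \<in> GrCInst F \<Delta>" unfolding GrCInst_def using cinst_trans by blast
qed

theorem corollary5p9:
  fixes F :: "('p,'f,'v,'d) caba"
  assumes "infinite (UNIV :: 'v set)"
    and "caba_framework F"
  shows "GrCInst F (CArg F) = GrCInst F (MGCArg F)"
proof
  show "GrCInst F (CArg F) \<subseteq> GrCInst F (MGCArg F)"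
    using GrCInst_subset_if_cinst ex_MGCArg_cinst_of_CArg[OF assms(1)] by blast
  show "GrCInst F (MGCArg F) \<subseteq> GrCInst F (CArg F)"
    using GrCInst_mono[OF MGCArg_subset_CArg] .
qed

end
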